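(* Let $S$ be a left cancellative semigroup. If $S$ has infinitely many $\mathcal{R}$-classes and at least one of them is infinite, then $S$ has infinitely many infinite $\mathcal{R}$-classes.
   Context: $S$ is left cancellative if $ax=ay$ implies $x=y$ for all $a,x,y\in S$. $\mathcal{R}$ is Green's relation on $S$: $x\,\mathcal{R}\,y$ iff $xS^1=yS^1$. *)

theory Defs
  imports Main
begin

definition left_cancellative :: "('a::semigroup_mult) itself \<Rightarrow> bool" where
  "left_cancellative _ \<longleftrightarrow> (\<forall>a x y :: 'a. a * x = a * y \<longrightarrow> x = y)"

definition right_ideal1 :: "'a::semigroup_mult \<Rightarrow> 'a set" where
  "right_ideal1 x = insert x {x * s | s. True}"

definition greenR :: "('a::semigroup_mult \<times> 'a) set" where
  "greenR = {(x, y). right_ideal1 x = right_ideal1 y}"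

definition R_classes :: "('a::semigroup_mult) set set" where
  "R_classes = UNIV // greenR"

end

theory Submission
  imports Defs
begin

text \<open>
  Let S be left cancellative and suppose only finitely many
  R-classes are infinite.  Left multiplication by a fixed a is injective and
  is compatible with R in both directions (axS^1 = ayS^1 iff xS^1 = yS^1),
  so it induces an injective map on R-classes sending infinite classes to
  infinite classes.  On the finite set of infinite classes this map is
  therefore a bijection, so every infinite class R_x is hit: x R a c for some
  c, whence x \<in> aS.  As this holds for every a, x is left divisible by all
  elements; taking a = x x gives an idempotent e = x u that is a left
  identity, so every z lies in xS, and also x \<in> zS.  Hence S has a single
  R-class, contradicting the assumption of infinitely many R-classes.
\<close>

lemma right_ideal1_self: "x \<in> right_ideal1 x"
  unfolding right_ideal1_def by auto

lemma right_ideal1_mult: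
  "right_ideal1 (a * x) = (\<lambda>z. a * z) ` right_ideal1 (x::'a::semigroup_mult)"
  unfolding right_ideal1_def by (auto simp: mult.assoc)

lemma right_ideal1_mono:
  "(a::'a::semigroup_mult) \<in> right_ideal1 b \<Longrightarrow> right_ideal1 a \<subseteq> right_ideal1 b"
  unfolding right_ideal1_def by (auto simp: mult.assoc)

lemma right_ideal1_mult_factor:
  "(x::'a::semigroup_mult) \<in> right_ideal1 (a * c) \<Longrightarrow> \<exists>u. x = a * u"
  unfolding right_ideal1_def by (auto simp: mult.assoc)

definition R_class :: "'a::semigroup_mult \<Rightarrow> 'a set" where
  "R_class a = {b. right_ideal1 b = right_ideal1 a}"

lemma R_classes_eq: "(R_classes :: 'a::semigroup_mult set set) = range R_class"
  unfolding R_classes_def quotient_def greenR_def R_class_def by auto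

lemma R_class_self: "a \<in> R_class a"
  unfolding R_class_def by simp

lemma R_class_eq_iff: "R_class a = R_class b \<longleftrightarrow> right_ideal1 a = right_ideal1 b"
  unfolding R_class_def by auto

lemma left_cancellativeD:
  "left_cancellative TYPE('a::semigroup_mult) \<Longrightarrow> inj (\<lambda>z::'a. a * z)"
  unfolding left_cancellative_def by (auto intro: injI)

lemma R_left_mult_iff:
  assumes "left_cancellative TYPE('a::semigroup_mult)"
  shows "right_ideal1 (a * x) = right_ideal1 (a * y) \<longleftrightarrow> right_ideal1 x = right_ideal1 (y::'a)"
  using left_cancellativeD[OF assms] by (simp add: right_ideal1_mult inj_image_eq_iff)

definition R_translate :: "'a::semigroup_mult \<Rightarrow> 'a set \<Rightarrow> 'a set" where
  "R_translate a C = R_class (a * (SOME c. c \<in> C))"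

lemma R_translate_R_class:
  assumes "left_cancellative TYPE('a::semigroup_mult)"
  shows "R_translate a (R_class x) = R_class (a * (x::'a))"
proof -
  have "(SOME c. c \<in> R_class x) \<in> R_class x"
    using R_class_self by (rule someI)
  then show ?thesis
    unfolding R_translate_def R_class_eq_iff
    by (simp add: R_left_mult_iff[OF assms] R_class_def)
qed

lemma R_translate_inj:
  assumes "left_cancellative TYPE('a::semigroup_mult)"
  shows "inj_on (R_translate (a::'a)) R_classes"
proof (rule inj_onI)
  fix C D :: "'a set"
  assume "C \<in> R_classes" "D \<in> R_classes" and eq: "R_translate a C = R_translate a D"
  then obtain y z where C: "C = R_class y" and D: "D = R_class z"
    by (auto simp: R_classes_eq)
  have "right_ideal1 (a * y) = right_ideal1 (a * z)"
    using eq by (simp add: C D R_translate_R_class[OF assms] R_class_eq_iff)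
  then show "C = D"
    by (simp add: C D R_class_eq_iff R_left_mult_iff[OF assms])
qed

text \<open>a R_x lies inside R_{ax}, so the translate of an infinite class is infinite.\<close>
lemma R_translate_infinite:
  assumes "left_cancellative TYPE('a::semigroup_mult)" and "infinite (R_class (x::'a))"
  shows "infinite (R_translate a (R_class x))"
proof -
  have "(\<lambda>z. a * z) ` R_class x \<subseteq> R_class (a * x)"
    unfolding R_class_def by (auto simp: right_ideal1_mult)
  moreover have "infinite ((\<lambda>z. a * z) ` R_class x)"
    using assms(2) finite_imageD inj_on_subset[OF left_cancellativeD[OF assms(1)] subset_UNIV]
    by blast
  ultimately have "infinite (R_class (a * x))"
    by (rule infinite_super)
  then show ?thesis
    by (simp add: R_translate_R_class[OF assms(1)])
qed

text \<open>If only finitely many R-classes are infinite, translation permutes them;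
  hence every element of an infinite class is left divisible by every element.\<close>
lemma left_divisible_if_finitely_many_infinite:
  assumes canc: "left_cancellative TYPE('a::semigroup_mult)"
    and fin: "finite {C \<in> (R_classes :: 'a set set). infinite C}"
    and x: "infinite (R_class (x::'a))"
  shows "\<exists>u. x = a * u"
proof -
  let ?I = "{C \<in> (R_classes :: 'a set set). infinite C}"
  have maps: "R_translate a ` ?I \<subseteq> ?I"
  proof
    fix D assume "D \<in> R_translate a ` ?I"
    then obtain y where y: "infinite (R_class y)" and D: "D = R_translate a (R_class y)"
      by (auto simp: R_classes_eq)
    show "D \<in> ?I"
      using R_translate_infinite[OF canc y]
      by (auto simp: D R_translate_R_class[OF canc] R_classes_eq)
  qed
  have "R_translate a ` ?I = ?I"
    using fin maps inj_on_subset[OF R_translate_inj[OF canc]] by (rule endo_inj_surj) blast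
  moreover have "R_class x \<in> ?I"
    using x by (auto simp: R_classes_eq)
  ultimately obtain C where "C \<in> R_classes" and "R_class x = R_translate a C"
    by (metis (no_types, lifting) imageE mem_Collect_eq)
  then obtain y where "R_class x = R_translate a (R_class y)"
    by (auto simp: R_classes_eq)
  then have "right_ideal1 x = right_ideal1 (a * y)"
    by (simp add: R_translate_R_class[OF canc] R_class_eq_iff)
  then have "x \<in> right_ideal1 (a * y)"
    using right_ideal1_self[of x] by simp
  then show ?thesis by (rule right_ideal1_mult_factor)
qed

text \<open>An element divisible on the left by every element forces a single R-class:
  from x = x x u the element e = x u is an idempotent left identity.\<close>
lemma single_R_class_if_left_divisible:
  assumes canc: "left_cancellative TYPE('a::semigroup_mult)"
    and div: "\<And>a. \<exists>u. (x::'a) = a * u"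
  shows "R_class z = R_class x"
proof -
  have cancel: "\<And>a y w::'a. a * y = a * w \<Longrightarrow> y = w"
    using canc unfolding left_cancellative_def by blast
  obtain u where u: "x = x * x * u" using div by blast
  define e where "e = x * u"
  have "x * e = x * x * u"
    by (simp add: e_def mult.assoc)
  also have "\<dots> = x"
    by (rule u[symmetric])
  finally have xe: "x * e = x" .
  have "x * (e * e) = x * e"
    by (simp add: xe flip: mult.assoc)
  then have idem: "e * e = e" by (rule cancel)
  have left_id: "e * w = w" for w
  proof (rule cancel)
    show "e * (e * w) = e * w"
      by (simp add: idem flip: mult.assoc)
  qed
  have "z = e * z"
    by (rule left_id[symmetric])
  also have "\<dots> = x * (u * z)"
    by (simp add: e_def mult.assoc)
  finally have "z = x * (u * z)" .
  then have "right_ideal1 z \<subseteq> right_ideal1 x"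
    by (intro right_ideal1_mono) (auto simp: right_ideal1_def)
  moreover obtain w where "x = z * w" using div by blast
  then have "right_ideal1 x \<subseteq> right_ideal1 z"
    by (intro right_ideal1_mono) (auto simp: right_ideal1_def)
  ultimately show ?thesis by (simp add: R_class_eq_iff)
qed

theorem mainTheorem9:
  assumes "left_cancellative TYPE('a::semigroup_mult)"
    and "infinite (R_classes :: 'a set set)"
    and "\<exists>C \<in> (R_classes :: 'a set set). infinite C"
  shows "infinite {C \<in> (R_classes :: 'a set set). infinite C}"
proof
  assume fin: "finite {C \<in> (R_classes :: 'a set set). infinite C}"
  obtain x :: 'a where x: "infinite (R_class x)"
    using assms(3) by (auto simp: R_classes_eq)
  have "R_class z = R_class x" for z
    using single_R_class_if_left_divisible[OF assms(1)]
      left_divisible_if_finitely_many_infinite[OF assms(1) fin x] by blast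
  then have "(R_classes :: 'a set set) \<subseteq> {R_class x}"
    by (auto simp: R_classes_eq)
  then show False
    using assms(2) finite_subset by blast
qed

end
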